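(* Let $n\ge1$, $Q=2n+2$, fix constants $0<c_1<c_2<\infty$, and for $k\in\mathbb{Z}$ and functions $f,g$ on $\mathbb{H}^n$ define $$B(f,g)(x)=\int_{c_1\le|y|\le c_2} f(xy^{-1})g(xy)\,dy,\qquad B_k(f,g)(x)=\int_{c_12^{-k}\le|y|\le c_22^{-k}} f(xy^{-1})g(xy)\,dy.$$ Then, with implicit constants independent of $f,g\in L^1(\mathbb{H}^n)$ and of $k\in\mathbb{Z}$: (i) $\|B(f,g)\|_{L^{1/2}(\mathbb{H}^n)}\lesssim\|f\|_{L^1(\mathbb{H}^n)}\|g\|_{L^1(\mathbb{H}^n)}$; (ii) $\|B(f,g)\|_{L^{1}(\mathbb{H}^n)}\lesssim\|f\|_{L^1(\mathbb{H}^n)}\|g\|_{L^1(\mathbb{H}^n)}$; (iii) $\|B_k(f,g)\|_{L^{1/2}(\mathbb{H}^n)}\lesssim 2^{-Qk}\|f\|_{L^1(\mathbb{H}^n)}\|g\|_{L^1(\mathbb{H}^n)}$; (iv) $\|B_k(f,g)\|_{L^{1}(\mathbb{H}^n)}\lesssim\|f\|_{L^1(\mathbb{H}^n)}\|g\|_{L^1(\mathbb{H}^n)}$.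
   Context: $\mathbb{H}^n=\mathbb{C}^n\times\mathbb{R}$ is the Heisenberg group with group law $(z,t)\cdot(w,s)=(z+w,\,t+s+\tfrac12\operatorname{Im}(z\cdot\bar w))$, inverse $(z,t)^{-1}=(-z,-t)$, Haar measure $dz\,dt$, homogeneous dimension $Q=2n+2$, and Koranyi norm $|(z,t)|=(|z|^4+t^2)^{1/4}$. $\|h\|_{L^{1/2}}=(\int|h|^{1/2})^2$. $A\lesssim B$ means $A\le CB$ for a constant $C$ independent of the quantities involved. *)

theory Defs
  imports "HOL-Analysis.Analysis"
begin

text \<open>A point (z,t) with z = x + i y in C^n
  is represented as ((x, y), t) with x, y :: real^'n, so that the Lebesgue measure
  lborel on this Euclidean space is the Haar measure dz dt.  The dimension n is
  CARD('n).\<close>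

type_synonym 'n heis = "((real^'n) \<times> (real^'n)) \<times> real"

definition heis_z :: "'n::finite heis \<Rightarrow> 'n \<Rightarrow> complex" where
  "heis_z p j = Complex (fst (fst p) $ j) (snd (fst p) $ j)"

definition heis_mult :: "'n::finite heis \<Rightarrow> 'n heis \<Rightarrow> 'n heis" where
  "heis_mult p q = (fst p + fst q,
     snd p + snd q + (1/2) * Im (\<Sum>j\<in>UNIV. heis_z p j * cnj (heis_z q j)))"

definition heis_inv :: "'n::finite heis \<Rightarrow> 'n heis" where
  "heis_inv p = (- fst p, - snd p)"

definition koranyi :: "'n::finite heis \<Rightarrow> real" where
  "koranyi p = ((\<Sum>j\<in>UNIV. (cmod (heis_z p j))\<^sup>2)\<^sup>2 + (snd p)\<^sup>2) powr (1/4)"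

definition heis_annulus :: "real \<Rightarrow> real \<Rightarrow> 'n::finite heis set" where
  "heis_annulus a b = {y. a \<le> koranyi y \<and> koranyi y \<le> b}"

definition heis_bil :: "real \<Rightarrow> real \<Rightarrow> ('n::finite heis \<Rightarrow> complex) \<Rightarrow> ('n heis \<Rightarrow> complex)
    \<Rightarrow> 'n heis \<Rightarrow> complex" where
  "heis_bil a b f g x =
     (LINT y : heis_annulus a b | lborel. f (heis_mult x (heis_inv y)) * g (heis_mult x y))"

definition L1norm :: "('n::finite heis \<Rightarrow> complex) \<Rightarrow> ennreal" where
  "L1norm h = (\<integral>\<^sup>+ x. ennreal (cmod (h x)) \<partial>lborel)"

definition Lhalfnorm :: "('n::finite heis \<Rightarrow> complex) \<Rightarrow> ennreal" where
  "Lhalfnorm h = (\<integral>\<^sup>+ x. ennreal (sqrt (cmod (h x))) \<partial>lborel)\<^sup>2"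

end

theory Submission
  imports Defs
begin

(* In coordinates x y^-1 = 2x - xy, and Lebesgue measure is invariant under left and right
   Heisenberg translations, which are shears.  Substituting v = xy and then integrating in x gives
     2^(2n+1) int int |f(x y^-1)| |g(x y)| dy dx = ||f||_1 ||g||_1,
   which bounds B and B_k in L^1.
   For L^(1/2) at scale r, average sqrt |B| over right translates by the box
   Z = [-r,r]^2n x [-r^2,r^2].  Since Z times the Koranyi ball of radius c_2 r lies in a box N of the
   same shape, Cauchy-Schwarz on Z, the L^1 identity for f and g cut off to left translates of N, and
   Cauchy-Schwarz in the translation parameter give
     2^(2n+1) |Z| ||B||_(1/2) <= |N|^2 ||f||_1 ||g||_1,
   and |N|^2 / |Z| is a constant times r^(2n+2). *)

lemma nn_integral_lborel_affine:
  fixes t :: "'a::euclidean_space" and c :: real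
  assumes [measurable]: "h \<in> borel_measurable borel" and "c \<noteq> 0"
  shows "ennreal \<bar>c\<bar> ^ DIM('a) * (\<integral>\<^sup>+ x. h (t + c *\<^sub>R x) \<partial>lborel) = (\<integral>\<^sup>+ x. h x \<partial>lborel)"
  by (subst lborel_affine[OF \<open>c \<noteq> 0\<close>, of t])
     (simp add: nn_integral_density nn_integral_distr nn_integral_cmult ennreal_power)

lemma nn_integral_lborel_translate:
  fixes t :: "'a::euclidean_space"
  assumes "h \<in> borel_measurable borel"
  shows "(\<integral>\<^sup>+ x. h (t + x) \<partial>lborel) = (\<integral>\<^sup>+ x. h x \<partial>lborel)"
  using nn_integral_lborel_affine[OF assms, of 1 t] by simp

lemma nn_integral_lborel_shear:
  fixes h :: "'a::euclidean_space \<times> 'b::euclidean_space \<Rightarrow> ennreal"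
  assumes "h \<in> borel_measurable borel" and [measurable]: "\<phi> \<in> borel_measurable borel"
  shows "(\<integral>\<^sup>+ p. h (c + fst p, \<phi> (fst p) + snd p) \<partial>lborel) = (\<integral>\<^sup>+ p. h p \<partial>lborel)"
proof -
  have [measurable]: "h \<in> borel_measurable (borel \<Otimes>\<^sub>M borel)"
    using assms(1) by (simp add: borel_prod)
  have iterated: "(\<integral>\<^sup>+ p. k p \<partial>lborel) = (\<integral>\<^sup>+ a. (\<integral>\<^sup>+ s. k (a, s) \<partial>lborel) \<partial>lborel)"
    if "k \<in> borel_measurable (lborel \<Otimes>\<^sub>M lborel)" for k :: "'a \<times> 'b \<Rightarrow> ennreal"
    using lborel.nn_integral_fst[OF that] by (simp add: lborel_prod)
  have "(\<integral>\<^sup>+ p. h (c + fst p, \<phi> (fst p) + snd p) \<partial>lborel)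
      = (\<integral>\<^sup>+ a. (\<integral>\<^sup>+ s. h (c + a, \<phi> a + s) \<partial>lborel) \<partial>lborel)"
    by (rule iterated[of "\<lambda>p. h (c + fst p, \<phi> (fst p) + snd p)", simplified]) measurable
  also have "\<dots> = (\<integral>\<^sup>+ a. (\<integral>\<^sup>+ s. h (c + a, s) \<partial>lborel) \<partial>lborel)"
    by (intro nn_integral_cong nn_integral_lborel_translate) measurable
  also have "\<dots> = (\<integral>\<^sup>+ a. (\<integral>\<^sup>+ s. h (a, s) \<partial>lborel) \<partial>lborel)"
    by (rule nn_integral_lborel_translate) measurable
  also have "\<dots> = (\<integral>\<^sup>+ p. h p \<partial>lborel)"
    by (rule iterated[symmetric]) measurable
  finally show ?thesis .
qed

definition esqrt :: "ennreal \<Rightarrow> ennreal" where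
  "esqrt x = (if x = top then top else ennreal (sqrt (enn2real x)))"

lemma esqrt_power2 [simp]: "(esqrt x)\<^sup>2 = x"
  unfolding esqrt_def
  by (cases x) (auto simp: ennreal_power power2_eq_square ennreal_mult[symmetric])

lemma esqrt_ennreal: "0 \<le> c \<Longrightarrow> esqrt (ennreal c) = ennreal (sqrt c)"
  unfolding esqrt_def by simp

lemma ennreal_le_of_power2_le: "(x::ennreal)\<^sup>2 \<le> y\<^sup>2 \<Longrightarrow> x \<le> y"
  by (cases x; cases y) (auto simp: ennreal_power top_power_ennreal top_unique intro: power2_le_imp_le)

lemma esqrt_mono: "x \<le> y \<Longrightarrow> esqrt x \<le> esqrt y"
  by (rule ennreal_le_of_power2_le) simp

lemma borel_measurable_esqrt [measurable]:
  assumes [measurable]: "f \<in> borel_measurable M"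
  shows "(\<lambda>x. esqrt (f x)) \<in> borel_measurable M"
  unfolding esqrt_def by measurable

lemma nn_integral_indicator_square_le:
  assumes [measurable]: "Z \<in> sets M" "\<phi> \<in> borel_measurable M"
  shows "(\<integral>\<^sup>+ x. indicator Z x * \<phi> x \<partial>M)\<^sup>2
    \<le> emeasure M Z * (\<integral>\<^sup>+ x. indicator Z x * (\<phi> x)\<^sup>2 \<partial>M)"
proof -
  have [simp]: "(indicator Z x :: ennreal)\<^sup>2 = indicator Z x"
    "indicator Z x * (indicator Z x :: ennreal) = indicator Z x" for x
    by (simp_all split: split_indicator)
  show ?thesis
    using Cauchy_Schwarz_nn_integral[of "indicator Z" M "\<lambda>x. indicator Z x * \<phi> x"]
    by (simp add: power_mult_distrib mult.assoc[symmetric])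
qed

lemma nn_integral_square_le_product:
  assumes [measurable]: "f \<in> borel_measurable M" "a \<in> borel_measurable M" "b \<in> borel_measurable M"
    and le: "\<And>x. c * (f x)\<^sup>2 \<le> a x * b x"
  shows "c * (\<integral>\<^sup>+ x. f x \<partial>M)\<^sup>2 \<le> (\<integral>\<^sup>+ x. a x \<partial>M) * (\<integral>\<^sup>+ x. b x \<partial>M)"
proof -
  have "esqrt c * f x \<le> esqrt (a x) * esqrt (b x)" for x
    by (rule ennreal_le_of_power2_le) (simp add: power_mult_distrib le)
  then have "esqrt c * (\<integral>\<^sup>+ x. f x \<partial>M) \<le> (\<integral>\<^sup>+ x. esqrt (a x) * esqrt (b x) \<partial>M)"
    by (subst nn_integral_cmult[symmetric]) (auto intro: nn_integral_mono)
  then have "c * (\<integral>\<^sup>+ x. f x \<partial>M)\<^sup>2 \<le> (\<integral>\<^sup>+ x. esqrt (a x) * esqrt (b x) \<partial>M)\<^sup>2"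
    using power_mono[of _ _ 2] by (fastforce simp: power_mult_distrib)
  also have "\<dots> \<le> (\<integral>\<^sup>+ x. a x \<partial>M) * (\<integral>\<^sup>+ x. b x \<partial>M)"
    using Cauchy_Schwarz_nn_integral[of "\<lambda>x. esqrt (a x)" M "\<lambda>x. esqrt (b x)"] by simp
  finally show ?thesis .
qed

lemma ennreal_mult_bound_mono:
  "x \<le> ennreal a * y * z \<Longrightarrow> a \<le> b \<Longrightarrow> x \<le> ennreal b * y * z"
  by (erule order_trans) (intro mult_right_mono ennreal_leI; simp)

(* Im (z . conj w) in the real coordinates z = a + i b, w = c + i d. *)
definition symp_form :: "(real^'n::finite) \<times> (real^'n) \<Rightarrow> (real^'n) \<times> (real^'n) \<Rightarrow> real" where
  "symp_form u v = (\<Sum>j\<in>UNIV. snd u $ j * fst v $ j - fst u $ j * snd v $ j)"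

lemma heis_mult_eq:
  "heis_mult p q = (fst p + fst q, snd p + snd q + symp_form (fst p) (fst q) / 2)"
  unfolding heis_mult_def heis_z_def symp_form_def by (simp add: Im_sum)

lemma heis_inv_eq: "heis_inv p = - p"
  unfolding heis_inv_def by (simp add: prod_eq_iff)

lemma symp_form_add_left: "symp_form (u + v) w = symp_form u w + symp_form v w"
  unfolding symp_form_def by (simp add: sum.distrib[symmetric] algebra_simps)

lemma symp_form_add_right: "symp_form u (v + w) = symp_form u v + symp_form u w"
  unfolding symp_form_def by (simp add: sum.distrib[symmetric] algebra_simps)

lemma symp_form_minus_right: "symp_form u (- v) = - symp_form u v"
  unfolding symp_form_def by (simp add: sum_negf[symmetric] algebra_simps)

lemma heis_mult_assoc: "heis_mult (heis_mult a b) c = heis_mult a (heis_mult b c)"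
  by (simp add: heis_mult_eq symp_form_add_left symp_form_add_right prod_eq_iff
      algebra_simps add_divide_distrib)

lemma heis_mult_inv_right: "heis_mult x (heis_inv y) = 2 *\<^sub>R x - heis_mult x y"
  by (simp add: heis_mult_eq heis_inv_eq symp_form_minus_right prod_eq_iff vec_eq_iff algebra_simps)

lemma koranyi_heis_inv [simp]: "koranyi (heis_inv y) = koranyi y"
  unfolding koranyi_def heis_inv_def heis_z_def by (simp add: complex_norm)

lemma continuous_on_heis_mult:
  "continuous_on UNIV (\<lambda>p::'n::finite heis \<times> 'n heis. heis_mult (fst p) (snd p))"
  unfolding heis_mult_eq symp_form_def by (intro continuous_intros) auto

lemma measurable_heis_mult [measurable]:
  assumes [measurable]: "f \<in> borel_measurable M" "g \<in> borel_measurable M"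
  shows "(\<lambda>x. heis_mult (f x) (g x) :: 'n::finite heis) \<in> borel_measurable M"
proof -
  have "(\<lambda>p::'n heis \<times> 'n heis. heis_mult (fst p) (snd p)) \<in> borel_measurable borel"
    by (rule borel_measurable_continuous_onI[OF continuous_on_heis_mult])
  from measurable_compose[OF measurable_Pair[OF assms, unfolded borel_prod] this] show ?thesis
    by simp
qed

lemma measurable_heis_inv [measurable]:
  "f \<in> borel_measurable M \<Longrightarrow> (\<lambda>x. heis_inv (f x) :: 'n::finite heis) \<in> borel_measurable M"
  by (simp add: heis_inv_eq)

lemma measurable_symp_form [measurable]:
  "(\<lambda>a. symp_form u a) \<in> borel_measurable borel" "(\<lambda>a. symp_form a u) \<in> borel_measurable borel"
  unfolding symp_form_def by (intro borel_measurable_continuous_onI continuous_intros)+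

lemma measurable_koranyi [measurable]: "koranyi \<in> borel_measurable (borel :: 'n::finite heis measure)"
proof -
  have "(\<lambda>p::'n heis. (\<Sum>j\<in>UNIV. (cmod (heis_z p j))\<^sup>2)\<^sup>2 + (snd p)\<^sup>2) \<in> borel_measurable borel"
    unfolding heis_z_def complex_norm by (intro borel_measurable_continuous_onI continuous_intros)
  then show ?thesis
    unfolding koranyi_def by (intro powr_real_measurable) auto
qed

lemma nn_integral_heis_mult_left:
  fixes h :: "'n::finite heis \<Rightarrow> ennreal"
  assumes "h \<in> borel_measurable borel"
  shows "(\<integral>\<^sup>+ y. h (heis_mult x y) \<partial>lborel) = (\<integral>\<^sup>+ y. h y \<partial>lborel)"
  using nn_integral_lborel_shear[OF assms, of "\<lambda>a. snd x + symp_form (fst x) a / 2" "fst x"]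
  by (simp add: heis_mult_eq algebra_simps)

lemma nn_integral_heis_mult_right:
  fixes h :: "'n::finite heis \<Rightarrow> ennreal"
  assumes "h \<in> borel_measurable borel"
  shows "(\<integral>\<^sup>+ y. h (heis_mult y x) \<partial>lborel) = (\<integral>\<^sup>+ y. h y \<partial>lborel)"
  using nn_integral_lborel_shear[OF assms, of "\<lambda>a. snd x + symp_form a (fst x) / 2" "fst x"]
  by (simp add: heis_mult_eq algebra_simps)

lemma nn_integral_heis_mult_indicator:
  fixes K :: "'n::finite heis \<Rightarrow> ennreal"
  assumes [measurable]: "K \<in> borel_measurable borel" "N \<in> sets borel"
  shows "(\<integral>\<^sup>+ w. (\<integral>\<^sup>+ u. indicator N u * K (heis_mult w u) \<partial>lborel) \<partial>lborel)
    = emeasure lborel N * (\<integral>\<^sup>+ x. K x \<partial>lborel)"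
proof -
  have "(\<integral>\<^sup>+ w. (\<integral>\<^sup>+ u. indicator N u * K (heis_mult w u) \<partial>lborel) \<partial>lborel)
      = (\<integral>\<^sup>+ u. (\<integral>\<^sup>+ w. indicator N u * K (heis_mult w u) \<partial>lborel) \<partial>lborel)"
    by (rule lborel_pair.Fubini'[symmetric]) measurable
  also have "\<dots> = (\<integral>\<^sup>+ u. indicator N u * (\<integral>\<^sup>+ x. K x \<partial>lborel) \<partial>lborel)"
    by (simp add: nn_integral_cmult nn_integral_heis_mult_right)
  also have "\<dots> = emeasure lborel N * (\<integral>\<^sup>+ x. K x \<partial>lborel)"
    by (simp add: nn_integral_multc)
  finally show ?thesis .
qed

lemma nn_integral_heis_bilinear:
  fixes F G :: "'n::finite heis \<Rightarrow> ennreal"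
  assumes [measurable]: "F \<in> borel_measurable borel" "G \<in> borel_measurable borel"
  shows "2 ^ DIM('n heis) * (\<integral>\<^sup>+ x. (\<integral>\<^sup>+ y. F (heis_mult x (heis_inv y)) * G (heis_mult x y)
      \<partial>lborel) \<partial>lborel)
    = (\<integral>\<^sup>+ x. F x \<partial>lborel) * (\<integral>\<^sup>+ x. G x \<partial>lborel)"
proof -
  have "(\<integral>\<^sup>+ x. (\<integral>\<^sup>+ y. F (heis_mult x (heis_inv y)) * G (heis_mult x y) \<partial>lborel) \<partial>lborel)
      = (\<integral>\<^sup>+ x. (\<integral>\<^sup>+ v. F (2 *\<^sub>R x - v) * G v \<partial>lborel) \<partial>lborel)"
    unfolding heis_mult_inv_right
    by (intro nn_integral_cong nn_integral_heis_mult_left[where h="\<lambda>v. F (2 *\<^sub>R _ - v) * G v"])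
       measurable
  also have "\<dots> = (\<integral>\<^sup>+ v. (\<integral>\<^sup>+ x. F (- v + 2 *\<^sub>R x) \<partial>lborel) * G v \<partial>lborel)"
    by (subst lborel_pair.Fubini') (simp_all add: nn_integral_multc)
  finally have "2 ^ DIM('n heis) * (\<integral>\<^sup>+ x. (\<integral>\<^sup>+ y. F (heis_mult x (heis_inv y))
        * G (heis_mult x y) \<partial>lborel) \<partial>lborel)
      = (\<integral>\<^sup>+ v. (2 ^ DIM('n heis) * (\<integral>\<^sup>+ x. F (- v + 2 *\<^sub>R x) \<partial>lborel)) * G v \<partial>lborel)"
    by (simp add: nn_integral_cmult mult.assoc)
  also have "\<dots> = (\<integral>\<^sup>+ v. (\<integral>\<^sup>+ x. F x \<partial>lborel) * G v \<partial>lborel)"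
    using nn_integral_lborel_affine[OF assms(1), of 2 "- _"] by simp
  finally show ?thesis
    by (simp add: nn_integral_cmult)
qed

definition heis_bil_ball :: "real \<Rightarrow> ('n::finite heis \<Rightarrow> ennreal) \<Rightarrow> ('n heis \<Rightarrow> ennreal)
    \<Rightarrow> 'n heis \<Rightarrow> ennreal" where
  "heis_bil_ball b F G x = (\<integral>\<^sup>+ y. indicator {y. koranyi y \<le> b} y
     * (F (heis_mult x (heis_inv y)) * G (heis_mult x y)) \<partial>lborel)"

lemma borel_measurable_heis_bil_ball [measurable]:
  assumes [measurable]: "F \<in> borel_measurable borel" "G \<in> borel_measurable borel"
  shows "heis_bil_ball b F G \<in> borel_measurable borel"
  unfolding heis_bil_ball_def by measurable

lemma norm_heis_bil_le_heis_bil_ball: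
  "ennreal (cmod (heis_bil a b f g x))
     \<le> heis_bil_ball b (\<lambda>u. ennreal (cmod (f u))) (\<lambda>u. ennreal (cmod (g u))) x"
proof -
  have norm_integral_le: "ennreal (norm (integral\<^sup>L M \<phi>)) \<le> (\<integral>\<^sup>+ y. ennreal (norm (\<phi> y)) \<partial>M)"
    for M and \<phi> :: "_ \<Rightarrow> complex"
    by (cases "integrable M \<phi>") (simp_all add: integral_norm_bound_ennreal not_integrable_integral_eq)
  have "ennreal (cmod (heis_bil a b f g x)) \<le> (\<integral>\<^sup>+ y. ennreal (norm (indicator (heis_annulus a b) y
      *\<^sub>R (f (heis_mult x (heis_inv y)) * g (heis_mult x y)))) \<partial>lborel)"
    unfolding heis_bil_def set_lebesgue_integral_def by (rule norm_integral_le)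
  also have "\<dots> \<le> heis_bil_ball b (\<lambda>u. ennreal (cmod (f u))) (\<lambda>u. ennreal (cmod (g u))) x"
    unfolding heis_bil_ball_def
    by (intro nn_integral_mono)
       (auto simp: heis_annulus_def norm_mult ennreal_mult split: split_indicator)
  finally show ?thesis .
qed

lemma L1norm_heis_bil_le:
  fixes f g :: "'n::finite heis \<Rightarrow> complex"
  assumes [measurable]: "f \<in> borel_measurable borel" "g \<in> borel_measurable borel"
  shows "L1norm (heis_bil a b f g) \<le> L1norm f * L1norm g"
proof -
  let ?F = "\<lambda>u. ennreal (cmod (f u))" and ?G = "\<lambda>u. ennreal (cmod (g u))"
  let ?X = "\<integral>\<^sup>+ x. (\<integral>\<^sup>+ y. ?F (heis_mult x (heis_inv y)) * ?G (heis_mult x y) \<partial>lborel) \<partial>lborel"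
  have "L1norm (heis_bil a b f g) \<le> (\<integral>\<^sup>+ x. heis_bil_ball b ?F ?G x \<partial>lborel)"
    unfolding L1norm_def by (intro nn_integral_mono norm_heis_bil_le_heis_bil_ball)
  also have "\<dots> \<le> ?X"
    unfolding heis_bil_ball_def by (intro nn_integral_mono) (simp split: split_indicator)
  also have "\<dots> \<le> 2 ^ DIM('n heis) * ?X"
  proof -
    have "(1::ennreal) \<le> 2 ^ DIM('n heis)"
      by (rule one_le_power) simp
    from mult_right_mono[OF this, of ?X] show ?thesis
      by simp
  qed
  also have "\<dots> = L1norm f * L1norm g"
    unfolding L1norm_def by (rule nn_integral_heis_bilinear) measurable
  finally show ?thesis .
qed

lemma nn_integral_heis_bil_ball_localized_le:
  fixes F G :: "'n::finite heis \<Rightarrow> ennreal"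
  assumes [measurable]: "F \<in> borel_measurable borel" "G \<in> borel_measurable borel" "N \<in> sets borel"
    and ZN: "\<And>z y. z \<in> Z \<Longrightarrow> koranyi y \<le> b \<Longrightarrow> heis_mult z y \<in> N"
  shows "2 ^ DIM('n heis) * (\<integral>\<^sup>+ z. indicator Z z * heis_bil_ball b F G (heis_mult w z) \<partial>lborel)
    \<le> (\<integral>\<^sup>+ u. indicator N u * F (heis_mult w u) \<partial>lborel)
      * (\<integral>\<^sup>+ u. indicator N u * G (heis_mult w u) \<partial>lborel)"
proof -
  define Fw where "Fw u = indicator N u * F (heis_mult w u)" for u
  define Gw where "Gw u = indicator N u * G (heis_mult w u)" for u
  have "indicator Z z * heis_bil_ball b F G (heis_mult w z)
      \<le> (\<integral>\<^sup>+ y. Fw (heis_mult z (heis_inv y)) * Gw (heis_mult z y) \<partial>lborel)" for z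
  proof (cases "z \<in> Z")
    case True
    have "indicator {y. koranyi y \<le> b} y * (F (heis_mult (heis_mult w z) (heis_inv y))
        * G (heis_mult (heis_mult w z) y)) \<le> Fw (heis_mult z (heis_inv y)) * Gw (heis_mult z y)" for y
      using ZN[OF True, of y] ZN[OF True, of "heis_inv y"]
      by (simp add: Fw_def Gw_def heis_mult_assoc split: split_indicator)
    with True show ?thesis
      unfolding heis_bil_ball_def by (simp add: nn_integral_mono)
  qed simp
  then have "2 ^ DIM('n heis) * (\<integral>\<^sup>+ z. indicator Z z * heis_bil_ball b F G (heis_mult w z) \<partial>lborel)
      \<le> 2 ^ DIM('n heis) * (\<integral>\<^sup>+ z. (\<integral>\<^sup>+ y. Fw (heis_mult z (heis_inv y)) * Gw (heis_mult z y)
        \<partial>lborel) \<partial>lborel)"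
    by (intro mult_left_mono nn_integral_mono) auto
  also have "\<dots> = (\<integral>\<^sup>+ u. Fw u \<partial>lborel) * (\<integral>\<^sup>+ u. Gw u \<partial>lborel)"
    by (rule nn_integral_heis_bilinear) (simp_all add: Fw_def Gw_def)
  finally show ?thesis
    unfolding Fw_def Gw_def .
qed

lemma nn_integral_esqrt_heis_bil_ball_localized_le:
  fixes F G :: "'n::finite heis \<Rightarrow> ennreal"
  assumes [measurable]: "F \<in> borel_measurable borel" "G \<in> borel_measurable borel"
      "Z \<in> sets borel" "N \<in> sets borel"
    and ZN: "\<And>z y. z \<in> Z \<Longrightarrow> koranyi y \<le> b \<Longrightarrow> heis_mult z y \<in> N"
  shows "2 ^ DIM('n heis) * (\<integral>\<^sup>+ z. indicator Z z * esqrt (heis_bil_ball b F G (heis_mult w z)) \<partial>lborel)\<^sup>2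
    \<le> emeasure lborel Z * (\<integral>\<^sup>+ u. indicator N u * F (heis_mult w u) \<partial>lborel)
      * (\<integral>\<^sup>+ u. indicator N u * G (heis_mult w u) \<partial>lborel)"
proof -
  let ?D = "2 ^ DIM('n heis) :: ennreal" and ?H = "heis_bil_ball b F G"
  have "(\<integral>\<^sup>+ z. indicator Z z * esqrt (?H (heis_mult w z)) \<partial>lborel)\<^sup>2
      \<le> emeasure lborel Z * (\<integral>\<^sup>+ z. indicator Z z * ?H (heis_mult w z) \<partial>lborel)"
    using nn_integral_indicator_square_le[of Z lborel "\<lambda>z. esqrt (?H (heis_mult w z))"] by simp
  then have "?D * (\<integral>\<^sup>+ z. indicator Z z * esqrt (?H (heis_mult w z)) \<partial>lborel)\<^sup>2
      \<le> emeasure lborel Z * (?D * (\<integral>\<^sup>+ z. indicator Z z * ?H (heis_mult w z) \<partial>lborel))"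
    by (subst mult.left_commute) (rule mult_left_mono, simp_all)
  also have "\<dots> \<le> emeasure lborel Z * ((\<integral>\<^sup>+ u. indicator N u * F (heis_mult w u) \<partial>lborel)
      * (\<integral>\<^sup>+ u. indicator N u * G (heis_mult w u) \<partial>lborel))"
    by (intro mult_left_mono nn_integral_heis_bil_ball_localized_le ZN) simp_all
  finally show ?thesis
    by (simp only: mult.assoc)
qed

(* |Z| int sqrt H = int_w int_Z sqrt H(wz) dz dw; apply Cauchy-Schwarz in z, then in w. *)
lemma Lhalfnorm_heis_bil_localized:
  fixes f g :: "'n::finite heis \<Rightarrow> complex" and Z N :: "'n heis set"
  assumes [measurable]: "f \<in> borel_measurable borel" "g \<in> borel_measurable borel"
      "Z \<in> sets borel" "N \<in> sets borel"
    and Z: "emeasure lborel Z \<noteq> 0" "emeasure lborel Z \<noteq> \<infinity>"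
    and ZN: "\<And>z y. z \<in> Z \<Longrightarrow> koranyi y \<le> r \<Longrightarrow> heis_mult z y \<in> N"
  shows "2 ^ DIM('n heis) * emeasure lborel Z * Lhalfnorm (heis_bil a r f g)
    \<le> (emeasure lborel N)\<^sup>2 * L1norm f * L1norm g"
proof -
  let ?F = "\<lambda>u. ennreal (cmod (f u))" and ?G = "\<lambda>u. ennreal (cmod (g u))"
  let ?D = "2 ^ DIM('n heis) :: ennreal" and ?mZ = "emeasure lborel Z" and ?mN = "emeasure lborel N"
  define H where "H = heis_bil_ball r ?F ?G"
  define I where "I = (\<integral>\<^sup>+ x. esqrt (H x) \<partial>lborel)"
  define A where "A w = (\<integral>\<^sup>+ z. indicator Z z * esqrt (H (heis_mult w z)) \<partial>lborel)" for w
  define FN where "FN w = (\<integral>\<^sup>+ u. indicator N u * ?F (heis_mult w u) \<partial>lborel)" for w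
  define GN where "GN w = (\<integral>\<^sup>+ u. indicator N u * ?G (heis_mult w u) \<partial>lborel)" for w
  have [measurable]: "H \<in> borel_measurable borel" "FN \<in> borel_measurable borel"
    "GN \<in> borel_measurable borel" "A \<in> borel_measurable borel"
    unfolding H_def FN_def GN_def A_def by measurable
  have half_le: "Lhalfnorm (heis_bil a r f g) \<le> I\<^sup>2"
    unfolding Lhalfnorm_def I_def H_def
    by (intro power_mono_ennreal nn_integral_mono)
       (simp add: esqrt_ennreal[symmetric] esqrt_mono norm_heis_bil_le_heis_bil_ball)
  have int_A: "(\<integral>\<^sup>+ w. A w \<partial>lborel) = ?mZ * I"
    unfolding A_def I_def by (rule nn_integral_heis_mult_indicator) measurable
  have int_FN: "(\<integral>\<^sup>+ w. FN w \<partial>lborel) = ?mN * L1norm f"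
    unfolding FN_def L1norm_def by (rule nn_integral_heis_mult_indicator) measurable
  have int_GN: "(\<integral>\<^sup>+ w. GN w \<partial>lborel) = ?mN * L1norm g"
    unfolding GN_def L1norm_def by (rule nn_integral_heis_mult_indicator) measurable
  have "?D * (A w)\<^sup>2 \<le> ?mZ * FN w * GN w" for w
    unfolding A_def FN_def GN_def H_def
    by (rule nn_integral_esqrt_heis_bil_ball_localized_le) (simp_all add: ZN)
  then have "?D * (\<integral>\<^sup>+ w. A w \<partial>lborel)\<^sup>2
      \<le> (\<integral>\<^sup>+ w. ?mZ * FN w \<partial>lborel) * (\<integral>\<^sup>+ w. GN w \<partial>lborel)"
    by (intro nn_integral_square_le_product) simp_all
  also have "(\<integral>\<^sup>+ w. ?mZ * FN w \<partial>lborel) = ?mZ * (?mN * L1norm f)"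
    using int_FN by (simp add: nn_integral_cmult)
  finally have "?mZ * (?D * ?mZ * I\<^sup>2) \<le> ?mZ * (?mN\<^sup>2 * L1norm f * L1norm g)"
    using int_A int_GN by (simp add: power2_eq_square ac_simps)
  then have "?D * ?mZ * I\<^sup>2 \<le> ?mN\<^sup>2 * L1norm f * L1norm g"
    using ennreal_mult_le_mult_iff[OF Z[unfolded infinity_ennreal_def]] by simp
  with half_le show ?thesis
    by (meson mult_left_mono order_trans zero_le)
qed

definition hbox :: "real \<Rightarrow> real \<Rightarrow> 'n::finite heis set" where
  "hbox R T = (cbox (- vec R) (vec R) \<times> cbox (- vec R) (vec R)) \<times> {-T..T}"

lemma mem_hbox_iff:
  "p \<in> hbox R T \<longleftrightarrow> (\<forall>j. \<bar>fst (fst p) $ j\<bar> \<le> R \<and> \<bar>snd (fst p) $ j\<bar> \<le> R) \<and> \<bar>snd p\<bar> \<le> T"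
  unfolding hbox_def mem_Times_iff mem_box_cart by (auto simp: abs_le_iff minus_le_iff)

lemma hbox_sets_borel [measurable]: "hbox R T \<in> sets borel"
  unfolding hbox_def by (intro borel_closed closed_Times closed_cbox closed_atLeastAtMost)

lemma emeasure_hbox:
  assumes "0 \<le> R" "0 \<le> T"
  shows "emeasure lborel (hbox R T :: 'n::finite heis set)
    = ennreal (2 ^ (2 * CARD('n) + 1) * R ^ (2 * CARD('n)) * T)"
proof -
  let ?cube = "cbox (- vec R) (vec R :: real^'n)"
  have cube: "emeasure lborel ?cube = ennreal ((2 * R) ^ CARD('n))"
    using assms
    by (simp add: emeasure_lborel_cbox_eq Basis_vec_def inner_axis axis_eq_axis
        prod.UNION_disjoint power_mult_distrib)
  have "emeasure lborel (hbox R T :: 'n heis set)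
      = emeasure lborel ?cube * emeasure lborel ?cube * emeasure lborel {-T..T}"
    unfolding hbox_def lborel_prod[symmetric] by (simp add: lborel.emeasure_pair_measure_Times)
  also have "\<dots> = ennreal ((2 * R) ^ CARD('n) * (2 * R) ^ CARD('n) * (2 * T))"
    using assms by (simp add: cube ennreal_mult)
  also have "(2 * R) ^ CARD('n) * (2 * R) ^ CARD('n) * (2 * T)
      = 2 ^ (2 * CARD('n) + 1) * R ^ (2 * CARD('n)) * T"
    unfolding mult_2[of "CARD('n)"] power_add power_one_right power_mult_distrib
    by (simp add: ac_simps)
  finally show ?thesis .
qed

lemma koranyi_le_imp_mem_hbox:
  assumes "koranyi y \<le> R"
  shows "y \<in> hbox R (R\<^sup>2)"
proof -
  define S where "S = (\<Sum>j\<in>UNIV. (cmod (heis_z y j))\<^sup>2)"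
  have "0 \<le> koranyi y"
    by (simp add: koranyi_def)
  have "S\<^sup>2 + (snd y)\<^sup>2 = koranyi y ^ 4"
    by (cases "S\<^sup>2 + (snd y)\<^sup>2 = 0") (simp_all add: koranyi_def S_def powr_power)
  also have "\<dots> \<le> (R\<^sup>2)\<^sup>2"
    using power_mono[OF assms \<open>0 \<le> koranyi y\<close>, of 4] by simp
  finally have "S\<^sup>2 \<le> (R\<^sup>2)\<^sup>2" "(snd y)\<^sup>2 \<le> (R\<^sup>2)\<^sup>2"
    using zero_le_power2[of S] zero_le_power2[of "snd y"] by linarith+
  then have "\<bar>S\<bar> \<le> R\<^sup>2" and t_le: "\<bar>snd y\<bar> \<le> R\<^sup>2"
    by (simp_all only: power2_le_iff_abs_le[OF zero_le_power2])
  then have S_le: "S \<le> R\<^sup>2"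
    by simp
  have coord_le: "(fst (fst y) $ j)\<^sup>2 + (snd (fst y) $ j)\<^sup>2 \<le> S" for j
    using member_le_sum[of j UNIV "\<lambda>j. (cmod (heis_z y j))\<^sup>2"]
    by (simp add: S_def heis_z_def cmod_power2)
  have "(fst (fst y) $ j)\<^sup>2 \<le> R\<^sup>2" "(snd (fst y) $ j)\<^sup>2 \<le> R\<^sup>2" for j
    using S_le coord_le[of j] zero_le_power2[of "fst (fst y) $ j"] zero_le_power2[of "snd (fst y) $ j"]
    by linarith+
  moreover have "0 \<le> R"
    using \<open>0 \<le> koranyi y\<close> assms by linarith
  ultimately have "\<bar>fst (fst y) $ j\<bar> \<le> R \<and> \<bar>snd (fst y) $ j\<bar> \<le> R" for j
    by (simp add: power2_le_iff_abs_le)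
  with t_le show ?thesis
    by (simp add: mem_hbox_iff)
qed

lemma abs_symp_form_le:
  fixes u v :: "(real^'n::finite) \<times> (real^'n)" and R1 R2 :: real
  assumes "\<And>j. \<bar>fst u $ j\<bar> \<le> R1 \<and> \<bar>snd u $ j\<bar> \<le> R1"
    and "\<And>j. \<bar>fst v $ j\<bar> \<le> R2 \<and> \<bar>snd v $ j\<bar> \<le> R2"
  shows "\<bar>symp_form u v\<bar> \<le> 2 * CARD('n) * R1 * R2"
proof -
  have term_le: "\<bar>snd u $ j * fst v $ j - fst u $ j * snd v $ j\<bar> \<le> 2 * R1 * R2" for j
  proof -
    have "\<bar>snd u $ j * fst v $ j\<bar> \<le> R1 * R2" "\<bar>fst u $ j * snd v $ j\<bar> \<le> R1 * R2"
      unfolding abs_mult using assms[of j]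
      by (auto intro!: mult_mono intro: order_trans[OF abs_ge_zero])
    then show ?thesis
      by linarith
  qed
  have "\<bar>symp_form u v\<bar> \<le> (\<Sum>j\<in>(UNIV::'n set). 2 * R1 * R2)"
    unfolding symp_form_def by (intro order_trans[OF sum_abs] sum_mono term_le)
  then show ?thesis
    by simp
qed

lemma heis_mult_mem_hbox:
  fixes p q :: "'n::finite heis" and R1 R2 T1 T2 :: real
  assumes "p \<in> hbox R1 T1" "q \<in> hbox R2 T2"
  shows "heis_mult p q \<in> hbox (R1 + R2) (T1 + T2 + CARD('n) * R1 * R2)"
proof -
  have p: "\<And>j. \<bar>fst (fst p) $ j\<bar> \<le> R1 \<and> \<bar>snd (fst p) $ j\<bar> \<le> R1" "\<bar>snd p\<bar> \<le> T1"
    and q: "\<And>j. \<bar>fst (fst q) $ j\<bar> \<le> R2 \<and> \<bar>snd (fst q) $ j\<bar> \<le> R2" "\<bar>snd q\<bar> \<le> T2"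
    using assms by (simp_all add: mem_hbox_iff)
  have "\<bar>symp_form (fst p) (fst q)\<bar> \<le> 2 * CARD('n) * R1 * R2"
    using p(1) q(1) by (rule abs_symp_form_le)
  with p(2) q(2) have "\<bar>snd (heis_mult p q)\<bar> \<le> T1 + T2 + CARD('n) * R1 * R2"
    by (auto simp: heis_mult_eq abs_le_iff)
  moreover have "\<bar>fst (fst (heis_mult p q)) $ j\<bar> \<le> R1 + R2 \<and> \<bar>snd (fst (heis_mult p q)) $ j\<bar> \<le> R1 + R2"
    for j using p(1)[of j] q(1)[of j] by (auto simp: heis_mult_eq abs_le_iff)
  ultimately show ?thesis
    by (simp add: mem_hbox_iff)
qed

lemma Lhalfnorm_heis_bil_scaled:
  fixes f g :: "'n::finite heis \<Rightarrow> complex" and c r :: real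
  assumes [measurable]: "f \<in> borel_measurable borel" "g \<in> borel_measurable borel"
    and "0 < c" "0 < r"
  shows "Lhalfnorm (heis_bil a (c * r) f g)
    \<le> ennreal ((1 + c) ^ (4 * CARD('n)) * (1 + c\<^sup>2 + CARD('n) * c)\<^sup>2 * r ^ (2 * CARD('n) + 2))
       * L1norm f * L1norm g"
proof -
  let ?n = "CARD('n)"
  define K where "K = (1 + c) ^ (4 * ?n) * (1 + c\<^sup>2 + ?n * c)\<^sup>2"
  define Z :: "'n heis set" where "Z = hbox r (r\<^sup>2)"
  define N :: "'n heis set" where "N = hbox (r + c * r) (r\<^sup>2 + (c * r)\<^sup>2 + ?n * r * (c * r))"
  define z where "z = 2 ^ (2 * ?n + 1) * r ^ (2 * ?n) * r\<^sup>2"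
  define m where "m = 2 ^ (2 * ?n + 1) * (r + c * r) ^ (2 * ?n) * (r\<^sup>2 + (c * r)\<^sup>2 + ?n * r * (c * r))"
  have "0 < z" "0 \<le> m"
    using assms by (simp_all add: z_def m_def)
  have mZ: "emeasure lborel Z = ennreal z" and mN: "emeasure lborel N = ennreal m"
    using assms by (simp_all add: Z_def N_def z_def m_def emeasure_hbox)
  have ZN: "heis_mult x y \<in> N" if "x \<in> Z" "koranyi y \<le> c * r" for x y
    using that(1) koranyi_le_imp_mem_hbox[OF that(2)] unfolding Z_def N_def by (rule heis_mult_mem_hbox)
  have "m\<^sup>2 = (2 ^ (2 * ?n + 1) * z) * (K * r ^ (2 * ?n + 2))"
  proof -
    have "r + c * r = (1 + c) * r" "r\<^sup>2 + (c * r)\<^sup>2 + ?n * r * (c * r) = (1 + c\<^sup>2 + ?n * c) * r\<^sup>2"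
      by (simp_all add: algebra_simps power2_eq_square)
    moreover have "(1 + c) ^ (4 * ?n) = ((1 + c) ^ (2 * ?n))\<^sup>2" "r ^ (2 * ?n + 2) = r ^ (2 * ?n) * r\<^sup>2"
      by (simp_all flip: power_mult power_add)
    ultimately show ?thesis
      unfolding z_def m_def K_def by (simp add: power_mult_distrib power2_eq_square ac_simps)
  qed
  then have m_sq: "(ennreal m)\<^sup>2 = ennreal (2 ^ (2 * ?n + 1) * z) * ennreal (K * r ^ (2 * ?n + 2))"
    using \<open>0 \<le> m\<close> \<open>0 < z\<close> \<open>0 < c\<close> \<open>0 < r\<close> by (simp add: ennreal_power K_def flip: ennreal_mult)
  have "2 ^ DIM('n heis) * emeasure lborel Z * Lhalfnorm (heis_bil a (c * r) f g)
      \<le> (emeasure lborel N)\<^sup>2 * L1norm f * L1norm g"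
    using \<open>0 < z\<close> by (intro Lhalfnorm_heis_bil_localized ZN) (simp_all add: Z_def N_def mZ[unfolded Z_def])
  moreover have "2 ^ DIM('n heis) * ennreal z = ennreal (2 ^ (2 * ?n + 1) * z)"
    using \<open>0 < z\<close> by (simp add: ennreal_mult mult_2[of ?n] flip: ennreal_power)
  ultimately have "ennreal (2 ^ (2 * ?n + 1) * z) * Lhalfnorm (heis_bil a (c * r) f g)
      \<le> ennreal (2 ^ (2 * ?n + 1) * z) * (ennreal (K * r ^ (2 * ?n + 2)) * L1norm f * L1norm g)"
    unfolding mZ mN m_sq by (simp only: mult.assoc)
  then show ?thesis
    using \<open>0 < z\<close> unfolding K_def by (subst (asm) ennreal_mult_le_mult_iff) auto
qed

theorem lemma2p1:
  fixes c1 c2 :: real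
  assumes "0 < c1" and "c1 < c2"
  shows "\<exists>C::real. C > 0 \<and>
    (\<forall>(f :: 'n::finite heis \<Rightarrow> complex) (g :: 'n heis \<Rightarrow> complex) (k :: int).
       integrable lborel f \<longrightarrow> integrable lborel g \<longrightarrow>
         Lhalfnorm (heis_bil c1 c2 f g) \<le> ennreal C * L1norm f * L1norm g
       \<and> L1norm (heis_bil c1 c2 f g) \<le> ennreal C * L1norm f * L1norm g
       \<and> Lhalfnorm (heis_bil (c1 * 2 powr (- real_of_int k)) (c2 * 2 powr (- real_of_int k)) f g)
           \<le> ennreal (C * 2 powr (- real (2 * CARD('n) + 2) * real_of_int k)) * L1norm f * L1norm g
       \<and> L1norm (heis_bil (c1 * 2 powr (- real_of_int k)) (c2 * 2 powr (- real_of_int k)) f g)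
           \<le> ennreal C * L1norm f * L1norm g)"
proof -
  let ?Q = "2 * CARD('n) + 2"
  define C where "C = max 1 ((1 + c2) ^ (4 * CARD('n)) * (1 + c2\<^sup>2 + CARD('n) * c2)\<^sup>2)"
  have "0 < c2"
    using assms by linarith
  have L1: "L1norm (heis_bil a b f g) \<le> ennreal C * L1norm f * L1norm g"
    if "integrable lborel f" "integrable lborel g" for f g :: "'n heis \<Rightarrow> complex" and a b
    using ennreal_mult_bound_mono[of _ 1 "L1norm f" "L1norm g" C] L1norm_heis_bil_le[of f g a b] that
    by (simp add: C_def borel_measurable_integrable)
  have half: "Lhalfnorm (heis_bil (c1 * r) (c2 * r) f g) \<le> ennreal (C * r ^ ?Q) * L1norm f * L1norm g"
    if "integrable lborel f" "integrable lborel g" "0 < r" for f g :: "'n heis \<Rightarrow> complex" and r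
    using that by (intro ennreal_mult_bound_mono[OF Lhalfnorm_heis_bil_scaled] mult_right_mono)
      (simp_all add: C_def \<open>0 < c2\<close> borel_measurable_integrable)
  have scale: "(2 powr - real_of_int k) ^ ?Q = 2 powr (- real ?Q * real_of_int k)" for k
    by (subst powr_power) (simp_all add: algebra_simps)
  show ?thesis
    unfolding scale[symmetric]
    by (intro exI[of _ C] conjI allI impI half[where r = 1, simplified] half L1) (simp_all add: C_def)
qed

end
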